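(* Let $\mathcal{S}$ and $\mathcal{A}$ be finite state and action spaces, $\gamma\in[0,1)$, $\mu$ a start-state distribution on $\mathcal{S}$, $P(s'|s,a)$ and $P_m(s'|s,a)$ two state transition probabilities, and $\pi(a|s)$, $\pi'(a|s)$ arbitrary policies. Then $$\big\|\mathbf{d}^{\pi'}-\mathbf{d}^{\pi}_m\big\|_1 \le \frac{2\gamma}{1-\gamma}\Big(\mathbb{E}_{s\sim d^\pi_m}\big[D_{TV}(\pi'(\cdot|s)\|\pi(\cdot|s))\big] + \mathbb{E}_{s\sim d^\pi_m,\,a\sim\pi}\big[D_{TV}(P(\cdot|s,a)\|P_m(\cdot|s,a))\big]\Big).$$
   Context: $d^{\pi'}(s)=(1-\gamma)\sum_{t\ge0}\gamma^t\Pr(S_t=s\mid\pi',P)$ is the discounted stationary state distribution under policy $\pi'$ and dynamics $P$ with $S_0\sim\mu$, and $d^\pi_m(s)=(1-\gamma)\sum_{t\ge0}\gamma^t\Pr(S_t=s\mid\pi,P_m)$ the corresponding distribution under policy $\pi$ and dynamics $P_m$ with the same start distribution $\mu$; $\mathbf{d}^{\pi'},\mathbf{d}^\pi_m\in\mathbb{R}^{|\mathcal{S}|}$ are their vector forms. $D_{TV}(p\|q)=\frac12\sum_x|p(x)-q(x)|$ is the total variation distance. *)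

theory Defs
  imports "HOL-Analysis.Analysis"
begin

definition is_dist :: "('x::finite \<Rightarrow> real) \<Rightarrow> bool" where
  "is_dist p \<longleftrightarrow> (\<forall>x. 0 \<le> p x) \<and> (\<Sum>x\<in>UNIV. p x) = 1"

definition D_TV :: "('x::finite \<Rightarrow> real) \<Rightarrow> ('x \<Rightarrow> real) \<Rightarrow> real" where
  "D_TV p q = (1/2) * (\<Sum>x\<in>UNIV. \<bar>p x - q x\<bar>)"

(* Pr(S_t = s | pol, P) with S_0 ~ mu; policy pol s a = pol(a|s), dynamics P s a s' = P(s'|s,a) *)
fun state_dist :: "('s::finite \<Rightarrow> real) \<Rightarrow> ('s \<Rightarrow> 'a::finite \<Rightarrow> real)
    \<Rightarrow> ('s \<Rightarrow> 'a \<Rightarrow> 's \<Rightarrow> real) \<Rightarrow> nat \<Rightarrow> 's \<Rightarrow> real" where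
  "state_dist mu pol P 0 s' = mu s'"
| "state_dist mu pol P (Suc t) s' =
     (\<Sum>s\<in>UNIV. state_dist mu pol P t s * (\<Sum>a\<in>UNIV. pol s a * P s a s'))"

definition disc_dist :: "real \<Rightarrow> ('s::finite \<Rightarrow> real) \<Rightarrow> ('s \<Rightarrow> 'a::finite \<Rightarrow> real)
    \<Rightarrow> ('s \<Rightarrow> 'a \<Rightarrow> 's \<Rightarrow> real) \<Rightarrow> 's \<Rightarrow> real" where
  "disc_dist \<gamma> mu pol P s = (1 - \<gamma>) * (\<Sum>t. \<gamma> ^ t * state_dist mu pol P t s)"

end

theory Submission
  imports Defs
begin

text \<open>Both discounted distributions are fixed points of a Bellman flow equation
  \<open>d = (1 - \<gamma>) \<mu> + \<gamma> d K\<close>, where \<open>K\<close> is the state-to-state kernel obtained by averaging the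
  dynamics over the policy. Subtracting the two equations, the difference \<open>d' - d\<close> is \<open>\<gamma>\<close> times
  \<open>(d' - d) K'\<close> plus \<open>d (K' - K)\<close>; since a stochastic kernel does not increase the \<open>\<ell>\<^sub>1\<close> norm,
  \<open>(1 - \<gamma>) \<parallel>d' - d\<parallel>\<^sub>1 \<le> \<gamma> \<Sum>\<^sub>s d s \<parallel>K' s - K s\<parallel>\<^sub>1\<close>, and the kernel difference of two mixtures
  splits into the policy and the dynamics total variation distances.\<close>

definition policy_kernel :: "('s \<Rightarrow> 'a::finite \<Rightarrow> real) \<Rightarrow> ('s \<Rightarrow> 'a \<Rightarrow> 's \<Rightarrow> real) \<Rightarrow> 's \<Rightarrow> 's \<Rightarrow> real"
  where "policy_kernel pol P s s' = (\<Sum>a\<in>UNIV. pol s a * P s a s')"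

lemma is_dist_mixture:
  fixes w :: "'a::finite \<Rightarrow> real" and Q :: "'a \<Rightarrow> 'x::finite \<Rightarrow> real"
  assumes "is_dist w" "\<And>a. is_dist (Q a)"
  shows "is_dist (\<lambda>x. \<Sum>a\<in>UNIV. w a * Q a x)"
proof -
  have "(\<Sum>x\<in>UNIV. \<Sum>a\<in>UNIV. w a * Q a x) = (\<Sum>a\<in>UNIV. w a * (\<Sum>x\<in>UNIV. Q a x))"
    by (subst sum.swap) (simp add: sum_distrib_left)
  with assms show ?thesis
    by (auto simp: is_dist_def intro!: sum_nonneg)
qed

lemma is_dist_policy_kernel:
  assumes "is_dist (pol s)" "\<And>a. is_dist (P s a)"
  shows "is_dist (policy_kernel pol P s)"
  unfolding policy_kernel_def using assms by (rule is_dist_mixture)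

lemma is_dist_le_1:
  assumes "is_dist p"
  shows "p x \<le> 1"
  using assms member_le_sum[of x UNIV p] by (simp add: is_dist_def)

lemma is_dist_state_dist:
  assumes "is_dist mu" "\<And>s a. is_dist (P s a)" "\<And>s. is_dist (pol s)"
  shows "is_dist (state_dist mu pol P t)"
proof (induction t)
  case 0
  then show ?case using assms(1) by (simp add: is_dist_def)
next
  case (Suc t)
  from is_dist_mixture[OF Suc is_dist_policy_kernel[OF assms(3,2)]] show ?case
    by (simp add: policy_kernel_def)
qed

lemma summable_discounted_state_dist:
  assumes "is_dist mu" "\<And>s a. is_dist (P s a)" "\<And>s. is_dist (pol s)"
    and "0 \<le> \<gamma>" "\<gamma> < 1"
  shows "summable (\<lambda>t. \<gamma> ^ t * state_dist mu pol P t s)"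
proof (rule summable_comparison_test'[where g="\<lambda>t. \<gamma> ^ t"])
  show "summable (\<lambda>t. \<gamma> ^ t)" using assms(4,5) by simp
  fix t :: nat
  have "is_dist (state_dist mu pol P t)"
    using assms(1-3) by (rule is_dist_state_dist)
  then have "0 \<le> state_dist mu pol P t s" "state_dist mu pol P t s \<le> 1"
    by (auto simp: is_dist_def is_dist_le_1)
  then show "norm (\<gamma> ^ t * state_dist mu pol P t s) \<le> \<gamma> ^ t"
    using assms(4) by (simp add: abs_mult mult_left_le)
qed

lemma disc_dist_nonneg:
  assumes "is_dist mu" "\<And>s a. is_dist (P s a)" "\<And>s. is_dist (pol s)"
    and "0 \<le> \<gamma>" "\<gamma> < 1"
  shows "0 \<le> disc_dist \<gamma> mu pol P s"
  using summable_discounted_state_dist[OF assms] is_dist_state_dist[OF assms(1-3)] assms(4,5)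
  unfolding disc_dist_def is_dist_def by (intro mult_nonneg_nonneg suminf_nonneg) auto

lemma disc_dist_flow:
  assumes "is_dist mu" "\<And>s a. is_dist (P s a)" "\<And>s. is_dist (pol s)"
    and "0 \<le> \<gamma>" "\<gamma> < 1"
  shows "disc_dist \<gamma> mu pol P s' = (1 - \<gamma>) * mu s'
    + \<gamma> * (\<Sum>s\<in>UNIV. disc_dist \<gamma> mu pol P s * policy_kernel pol P s s')"
proof -
  define D where "D s = (\<Sum>t. \<gamma> ^ t * state_dist mu pol P t s)" for s
  define K where "K = policy_kernel pol P"
  note summable_terms = summable_discounted_state_dist[OF assms]
  have "D s' = (\<Sum>t. \<gamma> ^ Suc t * state_dist mu pol P (Suc t) s') + mu s'"
    unfolding D_def using suminf_split_head[OF summable_terms[where s=s']] by simp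
  also have "(\<Sum>t. \<gamma> ^ Suc t * state_dist mu pol P (Suc t) s')
      = (\<Sum>t. \<gamma> * (\<Sum>s\<in>UNIV. \<gamma> ^ t * state_dist mu pol P t s * K s s'))"
    by (simp add: K_def policy_kernel_def sum_distrib_left mult_ac)
  also have "\<dots> = \<gamma> * (\<Sum>t. \<Sum>s\<in>UNIV. \<gamma> ^ t * state_dist mu pol P t s * K s s')"
    by (rule suminf_mult) (auto intro!: summable_sum summable_mult2 summable_terms)
  also have "\<dots> = \<gamma> * (\<Sum>s\<in>UNIV. \<Sum>t. \<gamma> ^ t * state_dist mu pol P t s * K s s')"
    by (subst suminf_sum) (auto intro!: summable_mult2 summable_terms)
  also have "\<dots> = \<gamma> * (\<Sum>s\<in>UNIV. D s * K s s')"
    unfolding D_def by (simp add: suminf_mult2[OF summable_terms])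
  finally show ?thesis
    by (simp add: disc_dist_def D_def[symmetric] K_def algebra_simps sum_distrib_left)
qed

lemma sum_abs_stochastic_le:
  fixes x :: "'s::finite \<Rightarrow> real" and K :: "'s \<Rightarrow> 't::finite \<Rightarrow> real"
  assumes "\<And>s. is_dist (K s)"
  shows "(\<Sum>s'\<in>UNIV. \<bar>\<Sum>s\<in>UNIV. x s * K s s'\<bar>) \<le> (\<Sum>s\<in>UNIV. \<bar>x s\<bar>)"
proof -
  have "(\<Sum>s'\<in>UNIV. \<bar>\<Sum>s\<in>UNIV. x s * K s s'\<bar>) \<le> (\<Sum>s'\<in>UNIV. \<Sum>s\<in>UNIV. \<bar>x s\<bar> * K s s')"
    using assms by (intro sum_mono order.trans[OF sum_abs]) (simp add: abs_mult is_dist_def)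
  also have "\<dots> = (\<Sum>s\<in>UNIV. \<bar>x s\<bar> * (\<Sum>s'\<in>UNIV. K s s'))"
    by (subst sum.swap) (simp add: sum_distrib_left)
  finally show ?thesis
    using assms by (simp add: is_dist_def)
qed

lemma l1_dist_perturbed_fixpoint:
  fixes d d' nu :: "'s::finite \<Rightarrow> real" and K K' :: "'s \<Rightarrow> 's \<Rightarrow> real"
  assumes "0 \<le> \<gamma>" "\<And>s. is_dist (K' s)" "\<And>s. 0 \<le> d s"
    and "\<And>s'. d' s' = nu s' + \<gamma> * (\<Sum>s\<in>UNIV. d' s * K' s s')"
    and "\<And>s'. d s' = nu s' + \<gamma> * (\<Sum>s\<in>UNIV. d s * K s s')"
  shows "(1 - \<gamma>) * (\<Sum>s\<in>UNIV. \<bar>d' s - d s\<bar>)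
    \<le> \<gamma> * (\<Sum>s\<in>UNIV. d s * (\<Sum>s'\<in>UNIV. \<bar>K' s s' - K s s'\<bar>))"
proof -
  let ?E = "\<Sum>s\<in>UNIV. \<bar>d' s - d s\<bar>"
  have diff: "d' s' - d s' = \<gamma> * ((\<Sum>s\<in>UNIV. (d' s - d s) * K' s s')
      + (\<Sum>s\<in>UNIV. d s * (K' s s' - K s s')))" for s'
    by (subst assms(4), subst assms(5)) (simp add: algebra_simps sum.distrib sum_subtractf)
  have "?E \<le> \<gamma> * ((\<Sum>s'\<in>UNIV. \<bar>\<Sum>s\<in>UNIV. (d' s - d s) * K' s s'\<bar>)
      + (\<Sum>s'\<in>UNIV. \<Sum>s\<in>UNIV. d s * \<bar>K' s s' - K s s'\<bar>))"
  proof -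
    have "\<bar>\<Sum>s\<in>UNIV. d s * (K' s s' - K s s')\<bar> \<le> (\<Sum>s\<in>UNIV. d s * \<bar>K' s s' - K s s'\<bar>)" for s'
      using sum_abs[of "\<lambda>s. d s * (K' s s' - K s s')" UNIV] assms(3) by (simp add: abs_mult)
    then have "\<bar>d' s' - d s'\<bar> \<le> \<gamma> * (\<bar>\<Sum>s\<in>UNIV. (d' s - d s) * K' s s'\<bar>
        + (\<Sum>s\<in>UNIV. d s * \<bar>K' s s' - K s s'\<bar>))" for s'
      unfolding diff[of s'] abs_mult using assms(1)
      by (intro mult_mono order.trans[OF abs_triangle_ineq] add_left_mono) auto
    then have "?E \<le> (\<Sum>s'\<in>UNIV. \<gamma> * (\<bar>\<Sum>s\<in>UNIV. (d' s - d s) * K' s s'\<bar>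
        + (\<Sum>s\<in>UNIV. d s * \<bar>K' s s' - K s s'\<bar>)))"
      by (rule sum_mono)
    then show ?thesis
      by (simp only: sum_distrib_left[symmetric] sum.distrib)
  qed
  also have "\<dots> \<le> \<gamma> * (?E + (\<Sum>s\<in>UNIV. d s * (\<Sum>s'\<in>UNIV. \<bar>K' s s' - K s s'\<bar>)))"
    using assms(1) sum_abs_stochastic_le[OF assms(2), of "\<lambda>s. d' s - d s"]
    by (subst sum.swap) (simp add: sum_distrib_left[symmetric] mult_left_mono)
  finally show ?thesis
    by (simp add: algebra_simps)
qed

lemma l1_dist_mixtures_le:
  fixes w w' :: "'a::finite \<Rightarrow> real" and Q Q' :: "'a \<Rightarrow> 'x::finite \<Rightarrow> real"
  assumes "is_dist w" "\<And>a. is_dist (Q' a)"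
  shows "(\<Sum>x\<in>UNIV. \<bar>(\<Sum>a\<in>UNIV. w' a * Q' a x) - (\<Sum>a\<in>UNIV. w a * Q a x)\<bar>)
    \<le> 2 * D_TV w' w + 2 * (\<Sum>a\<in>UNIV. w a * D_TV (Q' a) (Q a))"
proof -
  have split: "(\<Sum>a\<in>UNIV. w' a * Q' a x) - (\<Sum>a\<in>UNIV. w a * Q a x)
      = (\<Sum>a\<in>UNIV. (w' a - w a) * Q' a x) + (\<Sum>a\<in>UNIV. w a * (Q' a x - Q a x))" for x
    by (simp add: algebra_simps sum.distrib sum_subtractf)
  have "\<bar>(\<Sum>a\<in>UNIV. w' a * Q' a x) - (\<Sum>a\<in>UNIV. w a * Q a x)\<bar>
      \<le> (\<Sum>a\<in>UNIV. \<bar>w' a - w a\<bar> * Q' a x) + (\<Sum>a\<in>UNIV. w a * \<bar>Q' a x - Q a x\<bar>)" for x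
  proof -
    have "\<bar>\<Sum>a\<in>UNIV. (w' a - w a) * Q' a x\<bar> \<le> (\<Sum>a\<in>UNIV. \<bar>w' a - w a\<bar> * Q' a x)"
      using sum_abs[of "\<lambda>a. (w' a - w a) * Q' a x" UNIV] assms(2)
      by (simp add: abs_mult is_dist_def)
    moreover have "\<bar>\<Sum>a\<in>UNIV. w a * (Q' a x - Q a x)\<bar> \<le> (\<Sum>a\<in>UNIV. w a * \<bar>Q' a x - Q a x\<bar>)"
      using sum_abs[of "\<lambda>a. w a * (Q' a x - Q a x)" UNIV] assms(1)
      by (simp add: abs_mult is_dist_def)
    ultimately show ?thesis
      unfolding split by (rule order.trans[OF abs_triangle_ineq add_mono])
  qed
  then have "(\<Sum>x\<in>UNIV. \<bar>(\<Sum>a\<in>UNIV. w' a * Q' a x) - (\<Sum>a\<in>UNIV. w a * Q a x)\<bar>)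
      \<le> (\<Sum>x\<in>UNIV. \<Sum>a\<in>UNIV. \<bar>w' a - w a\<bar> * Q' a x)
        + (\<Sum>x\<in>UNIV. \<Sum>a\<in>UNIV. w a * \<bar>Q' a x - Q a x\<bar>)"
    by (simp only: sum.distrib[symmetric] sum_mono)
  also have "\<dots> = (\<Sum>a\<in>UNIV. \<bar>w' a - w a\<bar> * (\<Sum>x\<in>UNIV. Q' a x))
        + (\<Sum>a\<in>UNIV. w a * (\<Sum>x\<in>UNIV. \<bar>Q' a x - Q a x\<bar>))"
    by (subst (1 2) sum.swap) (simp add: sum_distrib_left)
  also have "\<dots> = 2 * D_TV w' w + 2 * (\<Sum>a\<in>UNIV. w a * D_TV (Q' a) (Q a))"
    using assms(2) by (simp add: is_dist_def D_TV_def sum_distrib_left)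
  finally show ?thesis .
qed

theorem lemma1:
  fixes \<gamma> :: real
    and mu :: "'s::finite \<Rightarrow> real"
    and P Pm :: "'s \<Rightarrow> 'a::finite \<Rightarrow> 's \<Rightarrow> real"
    and pol pol' :: "'s \<Rightarrow> 'a \<Rightarrow> real"
  assumes "0 \<le> \<gamma>" and "\<gamma> < 1"
    and "is_dist mu"
    and "\<And>s a. is_dist (P s a)"
    and "\<And>s a. is_dist (Pm s a)"
    and "\<And>s. is_dist (pol s)"
    and "\<And>s. is_dist (pol' s)"
  shows "(\<Sum>s\<in>UNIV. \<bar>disc_dist \<gamma> mu pol' P s - disc_dist \<gamma> mu pol Pm s\<bar>)
    \<le> 2 * \<gamma> / (1 - \<gamma>) *
      ((\<Sum>s\<in>UNIV. disc_dist \<gamma> mu pol Pm s * D_TV (pol' s) (pol s))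
     + (\<Sum>s\<in>UNIV. disc_dist \<gamma> mu pol Pm s *
          (\<Sum>a\<in>UNIV. pol s a * D_TV (P s a) (Pm s a))))"
proof -
  let ?d' = "disc_dist \<gamma> mu pol' P" and ?d = "disc_dist \<gamma> mu pol Pm"
  let ?B = "\<lambda>s. D_TV (pol' s) (pol s) + (\<Sum>a\<in>UNIV. pol s a * D_TV (P s a) (Pm s a))"
  have "(1 - \<gamma>) * (\<Sum>s\<in>UNIV. \<bar>?d' s - ?d s\<bar>)
      \<le> \<gamma> * (\<Sum>s\<in>UNIV. ?d s * (\<Sum>s'\<in>UNIV. \<bar>policy_kernel pol' P s s' - policy_kernel pol Pm s s'\<bar>))"
    using is_dist_policy_kernel[OF assms(7,4)] disc_dist_nonneg[OF assms(3,5,6,1,2)]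
      disc_dist_flow[OF assms(3,4,7,1,2)] disc_dist_flow[OF assms(3,5,6,1,2)]
    by (intro l1_dist_perturbed_fixpoint assms(1))
  also have "\<dots> \<le> \<gamma> * (\<Sum>s\<in>UNIV. ?d s * (2 * ?B s))"
  proof -
    have "(\<Sum>s'\<in>UNIV. \<bar>policy_kernel pol' P s s' - policy_kernel pol Pm s s'\<bar>) \<le> 2 * ?B s" for s
      using l1_dist_mixtures_le[OF assms(6) assms(4)] by (simp add: policy_kernel_def)
    then show ?thesis
      using disc_dist_nonneg[OF assms(3,5,6,1,2)] assms(1)
      by (intro mult_left_mono sum_mono) auto
  qed
  also have "\<dots> = (1 - \<gamma>) * (2 * \<gamma> / (1 - \<gamma>) * (\<Sum>s\<in>UNIV. ?d s * ?B s))"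
    using assms(2) by (simp add: sum_distrib_left mult_ac)
  finally have "(\<Sum>s\<in>UNIV. \<bar>?d' s - ?d s\<bar>) \<le> 2 * \<gamma> / (1 - \<gamma>) * (\<Sum>s\<in>UNIV. ?d s * ?B s)"
    by (rule mult_left_le_imp_le) (use assms(2) in simp)
  then show ?thesis
    by (simp add: distrib_left sum.distrib)
qed

end
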